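(* Fix $\beta>2$ and let $F_\beta(\mathbf{x},r)$, $r_2^\beta$, $\mathbf{m}_0^\beta(r)$, $\mathbf{m}_1^\beta(r)$, $\mathbf{m}_2^\beta(r)$ be as in the context. For $r\in(0,r_2^\beta)$, the three local minima of $F_\beta(\cdot,r)$ satisfy $$F_\beta(\mathbf{m}_1^\beta(r),r)=F_\beta(\mathbf{m}_2^\beta(r),r)<F_\beta(\mathbf{m}_0^\beta(r),r).$$ In particular, $\mathbf{m}_1^\beta(r)$ and $\mathbf{m}_2^\beta(r)$ are the global minima of $F_\beta(\cdot,r)$ for all $r>0$.
   Context: $\Xi=\{(x_1,x_2): x_1,x_2\ge0,\ x_1+x_2\le1\}$, $x_0=1-x_1-x_2$, $\mathbf{v}_k=(\cos(2\pi k/3),\sin(2\pi k/3))$, $F_\beta(\mathbf{x},r)=-\frac12|\sum_{k=0}^2x_k\mathbf{v}_k|^2+\frac1\beta\sum_{k=0}^2x_k\log(3x_k)+r\,x_0-\frac r2(x_1+x_2)$ (external field of magnitude $r\ge 0$, angle $\pi$). Let $h(t)=-3t(1-2t)\log\frac{1-2t}{t}-3t+1$, $f_r(t)=\frac{2}{3(1-r-3t)}\log\frac{1-2t}{t}$, $k_r=(1-r)/3$; for $0<r<1$, $m_0(r)$ is the unique solution in $(0,k_r)$ of $h(t)=r$, and $r_2^\beta$ is the unique $r\in(0,1)$ with $f_r(m_0(r))=\beta$. For $r\in(0,r_2^\beta)$, $p_\beta(r)$ is the unique solution of $f_r(t)=\beta$ in $(0,m_0(r))$ and $\mathbf{m}_0^\beta(r)=(p_\beta(r),p_\beta(r))$.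 Let $G_\beta(x)=\frac1\beta\log x-\frac32x$, $l_\beta=2/(3\beta)$, $g_\beta=G_\beta(l_\beta)$; for $y<g_\beta$, $H_\beta(y)<l_\beta<K_\beta(y)$ solve $G_\beta(x)=y$, and $H_\beta(g_\beta)=K_\beta(g_\beta)=l_\beta$. For $r>0$, $y_2^\beta(r)$ is the unique $y\le g_\beta$ with $H_\beta(y-3r/2)+H_\beta(y)+K_\beta(y)=1$, and $\mathbf{m}_1^\beta(r)=(H_\beta(y_2^\beta(r)),K_\beta(y_2^\beta(r)))$, $\mathbf{m}_2^\beta(r)=(K_\beta(y_2^\beta(r)),H_\beta(y_2^\beta(r)))$. For $r\in(0,r_2^\beta)$, $\mathbf{m}_0^\beta(r),\mathbf{m}_1^\beta(r),\mathbf{m}_2^\beta(r)$ are the local minima of $F_\beta(\cdot,r)$, and for $r>r_2^\beta$ the local minima are $\mathbf{m}_1^\beta(r),\mathbf{m}_2^\beta(r)$. *)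

theory Defs
  imports Complex_Main
begin

text \<open>The simplex Xi, points represented as pairs (x1, x2); x0 = 1 - x1 - x2.\<close>
definition Xi :: "(real \<times> real) set" where
  "Xi = {(x1, x2). x1 \<ge> 0 \<and> x2 \<ge> 0 \<and> x1 + x2 \<le> 1}"

definition vvec :: "nat \<Rightarrow> real \<times> real" where
  "vvec k = (cos (2 * pi * real k / 3), sin (2 * pi * real k / 3))"

definition coord :: "real \<times> real \<Rightarrow> nat \<Rightarrow> real" where
  "coord x k = (if k = 0 then 1 - fst x - snd x else if k = 1 then fst x else snd x)"

definition Fb :: "real \<Rightarrow> real \<times> real \<Rightarrow> real \<Rightarrow> real" where
  "Fb \<beta> x r =
     - (1/2) * ((\<Sum>k<3. coord x k * fst (vvec k))\<^sup>2 + (\<Sum>k<3. coord x k * snd (vvec k))\<^sup>2)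
     + (1/\<beta>) * (\<Sum>k<3. coord x k * ln (3 * coord x k))
     + r * coord x 0 - (r/2) * (coord x 1 + coord x 2)"

definition hfun :: "real \<Rightarrow> real" where
  "hfun t = - 3 * t * (1 - 2*t) * ln ((1 - 2*t) / t) - 3 * t + 1"

definition ffun :: "real \<Rightarrow> real \<Rightarrow> real" where
  "ffun r t = 2 / (3 * (1 - r - 3*t)) * ln ((1 - 2*t) / t)"

definition kfun :: "real \<Rightarrow> real" where
  "kfun r = (1 - r) / 3"

definition m0fun :: "real \<Rightarrow> real" where
  "m0fun r = (THE t. 0 < t \<and> t < kfun r \<and> hfun t = r)"

definition r2 :: "real \<Rightarrow> real" where
  "r2 \<beta> = (THE r. 0 < r \<and> r < 1 \<and> ffun r (m0fun r) = \<beta>)"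

definition pb :: "real \<Rightarrow> real \<Rightarrow> real" where
  "pb \<beta> r = (THE t. 0 < t \<and> t < m0fun r \<and> ffun r t = \<beta>)"

definition mm0 :: "real \<Rightarrow> real \<Rightarrow> real \<times> real" where
  "mm0 \<beta> r = (pb \<beta> r, pb \<beta> r)"

definition Gb :: "real \<Rightarrow> real \<Rightarrow> real" where
  "Gb \<beta> x = (1/\<beta>) * ln x - (3/2) * x"

definition lb :: "real \<Rightarrow> real" where
  "lb \<beta> = 2 / (3 * \<beta>)"

definition gb :: "real \<Rightarrow> real" where
  "gb \<beta> = Gb \<beta> (lb \<beta>)"

text \<open>For y < g: H(y) < l < K(y) solve G = y; H(g) = K(g) = l. Since G is strictly
  increasing on (0, l] and strictly decreasing on [l, \<infinity>), this is captured by:\<close>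
definition Hb :: "real \<Rightarrow> real \<Rightarrow> real" where
  "Hb \<beta> y = (if y = gb \<beta> then lb \<beta> else (THE x. 0 < x \<and> x < lb \<beta> \<and> Gb \<beta> x = y))"

definition Kb :: "real \<Rightarrow> real \<Rightarrow> real" where
  "Kb \<beta> y = (if y = gb \<beta> then lb \<beta> else (THE x. lb \<beta> < x \<and> Gb \<beta> x = y))"

definition y2 :: "real \<Rightarrow> real \<Rightarrow> real" where
  "y2 \<beta> r = (THE y. y \<le> gb \<beta> \<and> Hb \<beta> (y - 3 * r / 2) + Hb \<beta> y + Kb \<beta> y = 1)"

definition mm1 :: "real \<Rightarrow> real \<Rightarrow> real \<times> real" where
  "mm1 \<beta> r = (Hb \<beta> (y2 \<beta> r), Kb \<beta> (y2 \<beta> r))"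

definition mm2 :: "real \<Rightarrow> real \<Rightarrow> real \<times> real" where
  "mm2 \<beta> r = (Kb \<beta> (y2 \<beta> r), Hb \<beta> (y2 \<beta> r))"

end

theory Submission
  imports Defs "HOL-Analysis.Analysis" "HOL-Real_Asymp.Real_Asymp"
begin

text \<open>Since x0 + x1 + x2 = 1, Fb is a sum of the single-site terms psi x_k plus a linear field
  term, and psi' is Gb up to a constant. A global minimizer exists by compactness. It is interior,
  since moving a small mass \<epsilon> into an empty site gains entropy of order \<epsilon> ln \<epsilon>, so stationarity gives
  Gb x1 = Gb x2 = Gb x0 + 3r/2. The field forces x0 \<le> x1, x2, and strict concavity of psi beyond lb
  excludes x1 = x2. Hence {x1, x2} = {Hb y, Kb y} and x0 = Hb (y - 3r/2) for a solution y of the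
  equation defining y2, which is unique because its left-hand side is strictly decreasing in y; so the
  minimum value is Fb (mm1) = Fb (mm2). Finally mm0 = (p, p) with p < 1/4, and exchanging the sites
  x0 = 1 - 2p and x1 = p strictly lowers Fb.\<close>

section \<open>The free energy as a sum of single-site terms\<close>

text \<open>Since the coordinates sum to 1, the interaction term is
  |\<Sum>_k x_k v_k|^2 = 3/2 \<Sum>_k x_k^2 - 1/2, which gives \<open>Fb_coords\<close>.\<close>
definition psi :: "real \<Rightarrow> real \<Rightarrow> real" where
  "psi \<beta> t = (1/\<beta>) * (t * ln (3*t)) - (3/4) * t\<^sup>2"

lemma vvec_values:
  "vvec 0 = (1, 0)" "vvec 1 = (-1/2, sqrt 3/2)" "vvec 2 = (-1/2, -sqrt 3/2)"
proof -
  have "2 * pi * real 1 / 3 = pi - pi/3" "2 * pi * real 2 / 3 = pi/3 + pi"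
    by simp_all
  then show "vvec 0 = (1, 0)" "vvec 1 = (-1/2, sqrt 3/2)" "vvec 2 = (-1/2, -sqrt 3/2)"
    unfolding vvec_def
    by (simp_all only: cos_pi_minus sin_pi_minus cos_periodic_pi sin_periodic_pi cos_60 sin_60) simp_all
qed

lemma Fb_coords:
  "Fb \<beta> (a, b) r = psi \<beta> (1-a-b) + psi \<beta> a + psi \<beta> b + r*(1-a-b) - r/2*(a+b) + 1/4"
proof -
  have sum3: "(\<Sum>k<3. f k) = f 0 + f 1 + f (2::nat)" for f :: "nat \<Rightarrow> real"
    by (simp add: eval_nat_numeral)
  have coords: "coord (a,b) 0 = 1-a-b" "coord (a,b) 1 = a" "coord (a,b) 2 = b"
    by (simp_all add: coord_def)
  show ?thesis
    unfolding Fb_def psi_def sum3 vvec_values coords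
    by (simp add: power2_eq_square algebra_simps)
qed

lemma Fb_swap: "Fb \<beta> (a, b) r = Fb \<beta> (b, a) r"
  unfolding Fb_coords by (simp add: algebra_simps)

lemma Fb_exchange_x0_x1: "Fb \<beta> (1-a-b, b) r - Fb \<beta> (a, b) r = 3*r/2 * (2*a + b - 1)"
  unfolding Fb_coords by (simp add: field_simps)

lemma psi_zero [simp]: "psi \<beta> 0 = 0"
  unfolding psi_def by simp

lemma continuous_on_psi: "continuous_on {0..} (psi \<beta>)"
proof -
  have "continuous (at t within {0..}) (\<lambda>t. t * ln (3*t))" if "t \<ge> 0" for t :: real
  proof (cases "t = 0")
    case True
    have "((\<lambda>t::real. t * ln (3*t)) \<longlongrightarrow> 0) (at_right 0)"
      by real_asymp
    then show ?thesis
      using True by (simp add: continuous_within at_within_Ici_at_right)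
  next
    case False
    then have "isCont (\<lambda>t. t * ln (3*t)) t"
      by (intro continuous_intros) auto
    then show ?thesis
      by (rule continuous_at_imp_continuous_within)
  qed
  then have "continuous_on {0..} (\<lambda>t::real. t * ln (3*t))"
    by (simp add: continuous_on_eq_continuous_within)
  then show ?thesis
    unfolding psi_def by (intro continuous_on_diff continuous_on_mult_left) (auto intro: continuous_intros)
qed

lemma compact_Xi: "compact Xi"
proof -
  have Xi_eq: "Xi = ({0..1} \<times> {0..1}) \<inter> {x. fst x + snd x \<le> 1}"
    unfolding Xi_def by auto
  show ?thesis
    unfolding Xi_eq
    by (intro compact_Int_closed compact_Times compact_Icc closed_Collect_le continuous_intros)
qed

lemma continuous_on_Fb: "continuous_on Xi (\<lambda>x. Fb \<beta> x r)"
proof -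
  have psi_comp: "continuous_on Xi (\<lambda>x. psi \<beta> (f x))"
    if "continuous_on Xi f" "\<And>x. x \<in> Xi \<Longrightarrow> f x \<ge> 0" for f
    by (rule continuous_on_compose2[OF continuous_on_psi that(1)]) (use that(2) in auto)
  have "continuous_on Xi (\<lambda>x. psi \<beta> (1 - fst x - snd x))"
    "continuous_on Xi (\<lambda>x. psi \<beta> (fst x))" "continuous_on Xi (\<lambda>x. psi \<beta> (snd x))"
    by (intro psi_comp continuous_intros; auto simp: Xi_def)+
  moreover have "Fb \<beta> x r = psi \<beta> (1 - fst x - snd x) + psi \<beta> (fst x) + psi \<beta> (snd x)
      + r*(1 - fst x - snd x) - r/2*(fst x + snd x) + 1/4" for x
    using Fb_coords[of \<beta> "fst x" "snd x" r] by simp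
  ultimately show ?thesis
    by (simp only:) (intro continuous_intros)
qed

section \<open>The function Gb and its two inverse branches\<close>

lemma lb_pos: "\<beta> > 0 \<Longrightarrow> lb \<beta> > 0"
  unfolding lb_def by simp

lemma lb_less_third: "\<beta> > 2 \<Longrightarrow> 3 * lb \<beta> < 1"
  unfolding lb_def by (simp add: field_simps)

lemma Gb_diff_bounds:
  assumes "\<beta> > 0" "0 < v" "v < u"
  shows "(u-v) / (\<beta> * u) - 3/2*(u-v) < Gb \<beta> u - Gb \<beta> v"
    and "Gb \<beta> u - Gb \<beta> v < (u-v) / (\<beta> * v) - 3/2*(u-v)"
proof -
  have diff: "Gb \<beta> u - Gb \<beta> v = (ln u - ln v) / \<beta> - 3/2*(u-v)"
    unfolding Gb_def by (simp add: algebra_simps diff_divide_distrib)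
  have "(u-v) / u < ln u - ln v"
    using ln_diff_less[of v u] assms by (simp add: field_simps)
  then have "(u-v) / u / \<beta> < (ln u - ln v) / \<beta>"
    using assms(1) by (rule divide_strict_right_mono)
  then show "(u-v) / (\<beta> * u) - 3/2*(u-v) < Gb \<beta> u - Gb \<beta> v"
    unfolding diff by (simp add: mult.commute)
  have "ln u - ln v < (u-v) / v"
    using ln_diff_less[of u v] assms by simp
  then have "(ln u - ln v) / \<beta> < (u-v) / v / \<beta>"
    using assms(1) by (rule divide_strict_right_mono)
  then show "Gb \<beta> u - Gb \<beta> v < (u-v) / (\<beta> * v) - 3/2*(u-v)"
    unfolding diff by (simp add: mult.commute)
qed

lemma Gb_strict_mono_left:
  assumes "\<beta> > 0" "0 < v" "v < u" "u \<le> lb \<beta>"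
  shows "Gb \<beta> v < Gb \<beta> u"
proof -
  have "3/2 \<le> 1 / (\<beta> * u)"
    using assms unfolding lb_def by (simp add: field_simps)
  then have "3/2*(u-v) \<le> (u-v) / (\<beta> * u)"
    using assms mult_left_mono[of "3/2" "1 / (\<beta> * u)" "u-v"] by simp
  then show ?thesis
    using Gb_diff_bounds(1)[OF assms(1-3)] by linarith
qed

lemma Gb_strict_antimono_right:
  assumes "\<beta> > 0" "lb \<beta> \<le> v" "v < u"
  shows "Gb \<beta> u < Gb \<beta> v"
proof -
  have v: "0 < v" using assms lb_pos[of \<beta>] by linarith
  have "1 / (\<beta> * v) \<le> 3/2"
    using assms v unfolding lb_def by (simp add: field_simps)
  then have "(u-v) / (\<beta> * v) \<le> 3/2*(u-v)"
    using assms mult_left_mono[of "1 / (\<beta> * v)" "3/2" "u-v"] by simp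
  then show ?thesis
    using Gb_diff_bounds(2)[OF assms(1) v assms(3)] by linarith
qed

lemma Gb_less_gb: "\<beta> > 0 \<Longrightarrow> 0 < x \<Longrightarrow> x \<noteq> lb \<beta> \<Longrightarrow> Gb \<beta> x < gb \<beta>"
  unfolding gb_def
  using Gb_strict_mono_left[of \<beta> x "lb \<beta>"] Gb_strict_antimono_right[of \<beta> "lb \<beta>" x]
  by (cases "x < lb \<beta>") auto

lemma Gb_left_less_iff:
  assumes "\<beta> > 0" "0 < u" "0 < v" "u \<le> lb \<beta>" "v \<le> lb \<beta>"
  shows "Gb \<beta> v < Gb \<beta> u \<longleftrightarrow> v < u"
proof -
  have "v < u \<Longrightarrow> Gb \<beta> v < Gb \<beta> u" "u < v \<Longrightarrow> Gb \<beta> u < Gb \<beta> v"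
    using Gb_strict_mono_left[OF assms(1)] assms(2-5) by blast+
  then show ?thesis
    by (metis linorder_neq_iff order_less_asym order_less_irrefl)
qed

lemma Gb_right_less_iff:
  assumes "\<beta> > 0" "lb \<beta> \<le> u" "lb \<beta> \<le> v"
  shows "Gb \<beta> v < Gb \<beta> u \<longleftrightarrow> u < v"
proof -
  have "u < v \<Longrightarrow> Gb \<beta> v < Gb \<beta> u" "v < u \<Longrightarrow> Gb \<beta> u < Gb \<beta> v"
    using Gb_strict_antimono_right[OF assms(1)] assms(2,3) by blast+
  then show ?thesis
    by (metis linorder_neq_iff order_less_asym order_less_irrefl)
qed

lemma Gb_slope_left:
  assumes "\<beta> > 0" "0 < p" "p < q" "q \<le> lb \<beta> / 3"
  shows "3*(q-p) < Gb \<beta> q - Gb \<beta> p"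
proof -
  have "9/2 \<le> 1 / (\<beta> * q)"
    using assms unfolding lb_def by (simp add: field_simps)
  then have "9/2*(q-p) \<le> (q-p) / (\<beta> * q)"
    using assms mult_left_mono[of "9/2" "1 / (\<beta> * q)" "q-p"] by simp
  then show ?thesis
    using Gb_diff_bounds(1)[OF assms(1-3)] by linarith
qed

lemma Gb_slope_right:
  assumes "\<beta> > 0" "0 < p" "p < q"
  shows "Gb \<beta> p - Gb \<beta> q < 3/2*(q-p)"
proof -
  have "0 < (q-p) / (\<beta> * q)"
    using assms by simp
  then show ?thesis
    using Gb_diff_bounds(1)[OF assms] by linarith
qed

lemma continuous_on_Gb: "0 < a \<Longrightarrow> continuous_on {a..b} (Gb \<beta>)"
  unfolding Gb_def by (intro continuous_intros) auto

lemma Gb_left_branch_exists: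
  assumes "\<beta> > 0" "y < gb \<beta>"
  shows "\<exists>x. 0 < x \<and> x < lb \<beta> \<and> Gb \<beta> x = y"
proof -
  define e where "e = min (lb \<beta> / 2) (exp (\<beta> * y))"
  have e: "0 < e" "e < lb \<beta>" "e \<le> exp (\<beta> * y)"
    using lb_pos[OF assms(1)] unfolding e_def by auto
  then have "ln e \<le> \<beta> * y"
    by (metis exp_gt_zero ln_exp ln_le_cancel_iff)
  then have "(1/\<beta>) * ln e \<le> y"
    using assms(1) by (simp add: field_simps)
  then have "Gb \<beta> e \<le> y"
    using e unfolding Gb_def by linarith
  moreover have "y \<le> Gb \<beta> (lb \<beta>)"
    using assms(2) unfolding gb_def by simp
  ultimately obtain x where x: "e \<le> x" "x \<le> lb \<beta>" "Gb \<beta> x = y"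
    using IVT'[of "Gb \<beta>" e y "lb \<beta>"] continuous_on_Gb[OF e(1)] e by auto
  moreover have "x \<noteq> lb \<beta>"
    using x assms(2) unfolding gb_def by auto
  ultimately show ?thesis
    using e by (intro exI[of _ x]) auto
qed

lemma Gb_right_branch_exists:
  assumes "\<beta> > 0" "y < gb \<beta>"
  shows "\<exists>x. lb \<beta> < x \<and> Gb \<beta> x = y"
proof -
  have "filterlim (Gb \<beta>) at_bot at_top"
    unfolding Gb_def by real_asymp
  then obtain M where M: "lb \<beta> \<le> M" "Gb \<beta> M \<le> y"
    by (metis (no_types, lifting) eventually_at_top_linorder filterlim_at_bot nle_le)
  moreover have "y \<le> Gb \<beta> (lb \<beta>)"
    using assms(2) unfolding gb_def by simp
  ultimately obtain x where x: "lb \<beta> \<le> x" "x \<le> M" "Gb \<beta> x = y"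
    using IVT2'[of "Gb \<beta>" M y "lb \<beta>"] continuous_on_Gb[OF lb_pos[OF assms(1)]] by auto
  moreover have "x \<noteq> lb \<beta>"
    using x assms(2) unfolding gb_def by auto
  ultimately show ?thesis
    by (intro exI[of _ x]) auto
qed

lemma Hb_eq:
  assumes "\<beta> > 0" "0 < x" "x < lb \<beta>" "Gb \<beta> x = y"
  shows "Hb \<beta> y = x"
proof -
  have "y \<noteq> gb \<beta>"
    using Gb_less_gb[of \<beta> x] assms by auto
  moreover have "(THE x'. 0 < x' \<and> x' < lb \<beta> \<and> Gb \<beta> x' = y) = x"
  proof (rule the_equality)
    show "x' = x" if "0 < x' \<and> x' < lb \<beta> \<and> Gb \<beta> x' = y" for x'
      using Gb_strict_mono_left[of \<beta> x x'] Gb_strict_mono_left[of \<beta> x' x] that assms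
      by (cases x x' rule: linorder_cases) auto
  qed (use assms in simp)
  ultimately show ?thesis
    unfolding Hb_def by simp
qed

lemma Kb_eq:
  assumes "\<beta> > 0" "lb \<beta> < x" "Gb \<beta> x = y"
  shows "Kb \<beta> y = x"
proof -
  have "y \<noteq> gb \<beta>"
    using Gb_less_gb[of \<beta> x] lb_pos[of \<beta>] assms by auto
  moreover have "(THE x'. lb \<beta> < x' \<and> Gb \<beta> x' = y) = x"
  proof (rule the_equality)
    show "x' = x" if "lb \<beta> < x' \<and> Gb \<beta> x' = y" for x'
      using Gb_strict_antimono_right[of \<beta> x x'] Gb_strict_antimono_right[of \<beta> x' x] that assms
      by (cases x x' rule: linorder_cases) auto
  qed (use assms in simp)
  ultimately show ?thesis
    unfolding Kb_def by simp
qed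

lemma Hb_bounds:
  assumes "\<beta> > 0" "y < gb \<beta>"
  shows "0 < Hb \<beta> y" "Hb \<beta> y < lb \<beta>" "Gb \<beta> (Hb \<beta> y) = y"
proof -
  obtain x where "0 < x" "x < lb \<beta>" "Gb \<beta> x = y"
    using Gb_left_branch_exists[OF assms] by blast
  with Hb_eq[OF assms(1)] show "0 < Hb \<beta> y" "Hb \<beta> y < lb \<beta>" "Gb \<beta> (Hb \<beta> y) = y"
    by simp_all
qed

lemma Kb_bounds:
  assumes "\<beta> > 0" "y < gb \<beta>"
  shows "lb \<beta> < Kb \<beta> y" "Gb \<beta> (Kb \<beta> y) = y"
proof -
  obtain x where "lb \<beta> < x" "Gb \<beta> x = y"
    using Gb_right_branch_exists[OF assms] by blast
  with Kb_eq[OF assms(1)] show "lb \<beta> < Kb \<beta> y" "Gb \<beta> (Kb \<beta> y) = y"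
    by simp_all
qed

lemma Gb_scaled:
  assumes "\<beta> > 0" "s > 0"
  shows "Gb \<beta> (lb \<beta> * s) = (ln (lb \<beta>) + ln s - s) / \<beta>"
proof -
  have "ln (lb \<beta> * s) = ln (lb \<beta>) + ln s"
    using lb_pos[OF assms(1)] assms(2) by (rule ln_mult_pos)
  moreover have "3/2 * (lb \<beta> * s) = s / \<beta>"
    unfolding lb_def by simp
  ultimately show ?thesis
    unfolding Gb_def by (simp add: diff_divide_distrib add_divide_distrib)
qed

text \<open>By \<open>Gb_scaled\<close>, \<open>reflection_gap a = \<beta> * (Gb \<beta> (lb \<beta> * a) - Gb \<beta> (lb \<beta> * (3 - 2*a)))\<close>.\<close>
definition reflection_gap :: "real \<Rightarrow> real" where
  "reflection_gap a = ln a - ln (3 - 2*a) + 3 - 3*a"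

lemma reflection_gap_has_real_derivative:
  assumes "0 < x" "x < 3/2"
  shows "(reflection_gap has_real_derivative 3*(2*x - 1)*(x - 1) / (x*(3 - 2*x))) (at x)"
proof -
  have "(reflection_gap has_real_derivative 1/x - (-2)/(3 - 2*x) - 3) (at x)"
    unfolding reflection_gap_def[abs_def] using assms by (auto intro!: derivative_eq_intros)
  moreover have "1/x - (-2)/(3 - 2*x) - 3 = 3*(2*x - 1)*(x - 1) / (x*(3 - 2*x))"
    using assms by (simp add: field_simps)
  ultimately show ?thesis
    by simp
qed

lemma continuous_on_reflection_gap: "0 < s \<Longrightarrow> t < 3/2 \<Longrightarrow> continuous_on {s..t} reflection_gap"
  unfolding reflection_gap_def by (intro continuous_intros) auto

lemma ln_7_less_2: "ln (7::real) < 2"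
proof -
  have "ln (7::real) = 3 * ln 2 + ln (7/8)"
    using ln_realpow[of 2 3] by (simp add: ln_div)
  also have "ln (7/8::real) \<le> 7/8 - 1"
    by (rule ln_le_minus_one) simp
  finally show ?thesis
    using ln2_le_25_over_36 by linarith
qed

text \<open>The gap increases on [1/3, 1/2] from \<open>2 - ln 7 > 0\<close> and decreases on [1/2, 1] to 0.\<close>
lemma reflection_gap_pos:
  assumes "1/3 \<le> a" "a < 1"
  shows "0 < reflection_gap a"
proof (cases "a < 1/2")
  case True
  have "reflection_gap (1/3) \<le> reflection_gap a"
  proof (cases "a = 1/3")
    case False
    have "reflection_gap (1/3) < reflection_gap a"
    proof (rule DERIV_pos_imp_increasing_open[of "1/3" a reflection_gap])
      show "\<exists>y. (reflection_gap has_real_derivative y) (at x) \<and> 0 < y" if "1/3 < x" "x < a" for x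
        using reflection_gap_has_real_derivative[of x] that True
        by (auto simp: zero_less_divide_iff zero_less_mult_iff)
    qed (use assms False True continuous_on_reflection_gap in auto)
    then show ?thesis
      by simp
  next
    case True
    show ?thesis
      by (simp add: True)
  qed
  moreover have "reflection_gap (1/3) = 2 - ln 7"
    unfolding reflection_gap_def by (simp add: ln_div)
  ultimately show ?thesis
    using ln_7_less_2 by linarith
next
  case False
  have "reflection_gap 1 < reflection_gap a"
  proof (rule DERIV_neg_imp_decreasing_open[of a 1 reflection_gap])
    show "\<exists>y. (reflection_gap has_real_derivative y) (at x) \<and> y < 0" if "a < x" "x < 1" for x
      using reflection_gap_has_real_derivative[of x] that False by (auto intro!: divide_neg_pos mult_pos_neg)
  qed (use assms False continuous_on_reflection_gap in auto)
  then show ?thesis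
    unfolding reflection_gap_def by simp
qed

lemma Gb_reflection_less:
  assumes "\<beta> > 0" "lb \<beta> / 3 \<le> u" "u < lb \<beta>"
  shows "Gb \<beta> (3 * lb \<beta> - 2*u) < Gb \<beta> u"
proof -
  define a where "a = u / lb \<beta>"
  have l: "lb \<beta> > 0"
    using lb_pos assms by auto
  have a: "1/3 \<le> a" "a < 1"
    using assms l unfolding a_def by (auto simp: field_simps)
  have "u = lb \<beta> * a" "3 * lb \<beta> - 2*u = lb \<beta> * (3 - 2*a)"
    using l unfolding a_def by (simp_all add: field_simps)
  moreover have "(ln (lb \<beta>) + ln (3 - 2*a) - (3 - 2*a)) / \<beta> < (ln (lb \<beta>) + ln a - a) / \<beta>"
    using reflection_gap_pos[OF a] assms(1) unfolding reflection_gap_def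
    by (simp add: divide_strict_right_mono)
  ultimately show ?thesis
    using Gb_scaled[OF assms(1), of a] Gb_scaled[OF assms(1), of "3 - 2*a"] a by simp
qed

lemma psi_has_real_derivative:
  assumes "t > 0"
  shows "(psi \<beta> has_real_derivative Gb \<beta> t + (ln 3 + 1) / \<beta>) (at t)"
proof -
  have "((\<lambda>t. t * ln (3*t)) has_real_derivative ln (3*t) + 1) (at t)"
    using assms by (auto intro!: derivative_eq_intros simp: field_simps)
  then have "(psi \<beta> has_real_derivative (1/\<beta>) * (ln (3*t) + 1) - 3/4 * (2*t)) (at t)"
    unfolding psi_def[abs_def] by (intro DERIV_diff DERIV_cmult) (auto intro!: derivative_eq_intros)
  moreover have "(1/\<beta>) * (ln (3*t) + 1) - 3/4 * (2*t) = Gb \<beta> t + (ln 3 + 1) / \<beta>"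
    using assms unfolding Gb_def by (simp add: ln_mult_pos add_divide_distrib)
  ultimately show ?thesis
    by simp
qed

lemma psi_has_real_derivative_comp:
  assumes "(f has_real_derivative f') (at x)" "f x > 0"
  shows "((\<lambda>s. psi \<beta> (f s)) has_real_derivative (Gb \<beta> (f x) + (ln 3 + 1) / \<beta>) * f') (at x)"
  using DERIV_chain2[where f="psi \<beta>" and g=f, OF psi_has_real_derivative[OF assms(2)] assms(1)] .

lemma psi_strict_concave_right:
  assumes "\<beta> > 0" "lb \<beta> \<le> K - t" "t > 0"
  shows "psi \<beta> (K+t) + psi \<beta> (K-t) < 2 * psi \<beta> K"
proof -
  define psi' where "psi' s = Gb \<beta> s + (ln 3 + 1) / \<beta>" for s
  have deriv: "(psi \<beta> has_real_derivative psi' s) (at s)" if "K - t \<le> s" for s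
    unfolding psi'_def
    using psi_has_real_derivative[of s] that assms lb_pos[of \<beta>] by simp
  obtain z1 where z1: "K < z1" "psi \<beta> (K+t) - psi \<beta> K = t * psi' z1"
    using MVT2[of K "K+t" "psi \<beta>" psi'] deriv assms(3) by auto
  obtain z2 where z2: "K - t < z2" "z2 < K" "psi \<beta> K - psi \<beta> (K-t) = t * psi' z2"
    using MVT2[of "K-t" K "psi \<beta>" psi'] deriv assms(3) by auto
  have "psi' z1 < psi' z2"
    using Gb_strict_antimono_right[OF assms(1), of z2 z1] z1 z2 assms(2)
    unfolding psi'_def by simp
  then have "t * psi' z1 < t * psi' z2"
    using assms(3) by simp
  then show ?thesis
    using z1(2) z2(3) by simp
qed

section \<open>The equation defining y2\<close>

definition y2_condition :: "real \<Rightarrow> real \<Rightarrow> real \<Rightarrow> bool" where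
  "y2_condition \<beta> r y \<longleftrightarrow> y \<le> gb \<beta> \<and> Hb \<beta> (y - 3 * r / 2) + Hb \<beta> y + Kb \<beta> y = 1"

lemma y2_condition_branches:
  assumes "\<beta> > 2" "r > 0" "y2_condition \<beta> r y"
  shows "y < gb \<beta>" "0 < Hb \<beta> (y - 3*r/2)" "Hb \<beta> (y - 3*r/2) < Hb \<beta> y"
    "Hb \<beta> y < lb \<beta> / 3" "lb \<beta> < Kb \<beta> y"
proof -
  have \<beta>: "\<beta> > 0"
    using assms(1) by simp
  have sum: "Hb \<beta> (y - 3*r/2) + Hb \<beta> y + Kb \<beta> y = 1"
    using assms(3) unfolding y2_condition_def by simp
  have shifted: "y - 3*r/2 < gb \<beta>"
    using assms(2,3) unfolding y2_condition_def by simp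
  show y: "y < gb \<beta>"
  proof (rule ccontr)
    assume "\<not> y < gb \<beta>"
    then have "Hb \<beta> y = lb \<beta>" "Kb \<beta> y = lb \<beta>"
      using assms(3) unfolding y2_condition_def Hb_def Kb_def by auto
    then show False
      using sum Hb_bounds(2)[OF \<beta> shifted] lb_less_third[OF assms(1)] by linarith
  qed
  note u = Hb_bounds[OF \<beta> y] and v = Kb_bounds[OF \<beta> y] and w = Hb_bounds[OF \<beta> shifted]
  show "0 < Hb \<beta> (y - 3*r/2)" "lb \<beta> < Kb \<beta> y"
    using w v by simp_all
  show wu: "Hb \<beta> (y - 3*r/2) < Hb \<beta> y"
    using Gb_left_less_iff[OF \<beta> u(1) w(1) less_imp_le[OF u(2)] less_imp_le[OF w(2)]] u(3) w(3) assms(2)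
    by simp
  \<comment> \<open>otherwise Kb y < 3 lb - 2 Hb y, and the three values would sum to less than 3 lb < 1\<close>
  show "Hb \<beta> y < lb \<beta> / 3"
  proof (rule ccontr)
    assume "\<not> ?thesis"
    then have "Gb \<beta> (3 * lb \<beta> - 2 * Hb \<beta> y) < Gb \<beta> (Kb \<beta> y)"
      using Gb_reflection_less[OF \<beta> _ u(2)] u(3) v(2) by simp
    moreover have "lb \<beta> \<le> 3 * lb \<beta> - 2 * Hb \<beta> y"
      using u(2) by simp
    ultimately have "Kb \<beta> y < 3 * lb \<beta> - 2 * Hb \<beta> y"
      using Gb_right_less_iff[OF \<beta>] v(1) by simp
    then show False
      using sum wu lb_less_third[OF assms(1)] by linarith
  qed
qed

text \<open>On the branch below lb/3 the inverse Hb has slope at most 1/3, while Kb has slope below -2/3,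
  so the left-hand side of the equation for y2 is strictly decreasing in y.\<close>
lemma y2_condition_unique:
  assumes "\<beta> > 2" "r > 0" "y2_condition \<beta> r z1" "y2_condition \<beta> r z2"
  shows "z1 = z2"
proof -
  have \<beta>: "\<beta> > 0"
    using assms(1) by simp
  have less: False if z: "y2_condition \<beta> r z" "y2_condition \<beta> r z'" and "z < z'" for z z'
  proof -
    note B = y2_condition_branches[OF assms(1,2) z(1)] and B' = y2_condition_branches[OF assms(1,2) z(2)]
    define u w v where "u = Hb \<beta> z" and "w = Hb \<beta> (z - 3*r/2)" and "v = Kb \<beta> z"
    define u' w' v' where "u' = Hb \<beta> z'" and "w' = Hb \<beta> (z' - 3*r/2)" and "v' = Kb \<beta> z'"
    note defs = u_def w_def v_def u'_def w'_def v'_def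
    have G: "Gb \<beta> u = z" "Gb \<beta> w = z - 3*r/2" "Gb \<beta> v = z"
      "Gb \<beta> u' = z'" "Gb \<beta> w' = z' - 3*r/2" "Gb \<beta> v' = z'"
      using Hb_bounds[OF \<beta>] Kb_bounds[OF \<beta>] B(1) B'(1) assms(2) unfolding defs by simp_all
    have pos: "0 < w" "w < u" "u < lb \<beta> / 3" "0 < w'" "w' < u'" "u' < lb \<beta> / 3" "lb \<beta> < v" "lb \<beta> < v'"
      using B B' unfolding defs by simp_all
    have "u < u'" "w < w'" "v' < v"
      using Gb_left_less_iff[OF \<beta>, of u' u] Gb_left_less_iff[OF \<beta>, of w' w]
        Gb_right_less_iff[OF \<beta>, of v' v] G pos \<open>z < z'\<close> lb_pos[OF \<beta>]
      by simp_all
    then have "3*(u' - u) < z' - z" "3*(w' - w) < z' - z" "z' - z < 3/2*(v - v')"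
      using Gb_slope_left[OF \<beta>, of u u'] Gb_slope_left[OF \<beta>, of w w'] Gb_slope_right[OF \<beta>, of v' v]
        G pos lb_pos[OF \<beta>] by simp_all
    moreover have "w + u + v = 1" "w' + u' + v' = 1"
      using z unfolding y2_condition_def defs by simp_all
    ultimately show False
      by argo
  qed
  show ?thesis
    using less[OF assms(3,4)] less[OF assms(4,3)] by (meson linorder_neqE)
qed

lemma y2_eq:
  assumes "\<beta> > 2" "r > 0" "y2_condition \<beta> r y"
  shows "y2 \<beta> r = y"
  unfolding y2_def
proof (rule the_equality)
  show "y \<le> gb \<beta> \<and> Hb \<beta> (y - 3 * r / 2) + Hb \<beta> y + Kb \<beta> y = 1"
    using assms(3) unfolding y2_condition_def .
  show "z = y" if "z \<le> gb \<beta> \<and> Hb \<beta> (z - 3 * r / 2) + Hb \<beta> z + Kb \<beta> z = 1" for z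
    using y2_condition_unique[OF assms(1,2) _ assms(3), of z] that unfolding y2_condition_def by blast
qed

section \<open>Global minimizers of Fb\<close>

definition Fb_minimizer :: "real \<Rightarrow> real \<Rightarrow> real \<times> real \<Rightarrow> bool" where
  "Fb_minimizer \<beta> r x \<longleftrightarrow> x \<in> Xi \<and> (\<forall>y\<in>Xi. Fb \<beta> x r \<le> Fb \<beta> y r)"

lemma Fb_minimizer_exists: "\<exists>x. Fb_minimizer \<beta> r x"
proof -
  have "(0, 0) \<in> Xi"
    unfolding Xi_def by simp
  then show ?thesis
    unfolding Fb_minimizer_def
    using continuous_attains_inf[OF compact_Xi _ continuous_on_Fb] by blast
qed

lemma Fb_minimizer_swap: "Fb_minimizer \<beta> r (a, b) \<Longrightarrow> Fb_minimizer \<beta> r (b, a)"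
  unfolding Fb_minimizer_def Xi_def using Fb_swap by fastforce

lemma Fb_minimizer_le: "Fb_minimizer \<beta> r x \<Longrightarrow> y \<in> Xi \<Longrightarrow> Fb \<beta> x r \<le> Fb \<beta> y r"
  unfolding Fb_minimizer_def by blast

lemma Fb_minimizer_nonneg:
  "Fb_minimizer \<beta> r (a, b) \<Longrightarrow> a \<ge> 0 \<and> b \<ge> 0 \<and> 1-a-b \<ge> 0"
  unfolding Fb_minimizer_def Xi_def by auto

lemma psi_transfer_from_zero:
  assumes "\<beta> > 0" "r \<ge> 0"
  obtains \<epsilon> where "0 < \<epsilon>" "\<epsilon> \<le> 1/6"
    "\<And>x c. 1/3 \<le> x \<Longrightarrow> x \<le> 1 \<Longrightarrow> c \<le> 3*r/2 \<Longrightarrow>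
      psi \<beta> \<epsilon> + psi \<beta> (x - \<epsilon>) + c*\<epsilon> < psi \<beta> x"
proof
  \<comment> \<open>small enough that the entropy \<epsilon> ln (3\<epsilon>) / \<beta> \<le> -(2+2r)\<epsilon> outweighs all linear terms\<close>
  define \<epsilon> where "\<epsilon> = exp (-\<beta>*(2+2*r)) / 6"
  have "exp (-\<beta>*(2+2*r)) \<le> 1"
    using assms by simp
  then show \<epsilon>_le: "\<epsilon> \<le> 1/6"
    unfolding \<epsilon>_def by simp
  show \<epsilon>_pos: "0 < \<epsilon>"
    unfolding \<epsilon>_def by simp
  fix x c :: real
  assume x: "1/3 \<le> x" "x \<le> 1" and c: "c \<le> 3*r/2"
  have x_\<epsilon>: "0 < x - \<epsilon>"
    using x \<epsilon>_le by linarith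
  have "ln (3*\<epsilon>) = -\<beta>*(2+2*r) - ln 2"
    unfolding \<epsilon>_def by (simp add: ln_div)
  then have emptied: "\<epsilon> * ln (3*\<epsilon>) \<le> \<epsilon> * (-\<beta>*(2+2*r))"
    using \<epsilon>_pos by (intro mult_left_mono) auto
  have "(x - \<epsilon>) * ln (3*(x - \<epsilon>)) \<le> (x - \<epsilon>) * ln (3*x)"
    using x_\<epsilon> \<epsilon>_pos by (intro mult_left_mono) auto
  also have "\<dots> \<le> x * ln (3*x)"
    using x \<epsilon>_pos by (intro mult_right_mono) auto
  finally have donor: "(x - \<epsilon>) * ln (3*(x - \<epsilon>)) \<le> x * ln (3*x)" .
  define L where "L = \<epsilon> * ln (3*\<epsilon>) + (x - \<epsilon>) * ln (3*(x - \<epsilon>)) - x * ln (3*x)"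
  have "(1/\<beta>) * L \<le> (1/\<beta>) * (\<epsilon> * (-\<beta>*(2+2*r)))"
    using emptied donor assms(1) unfolding L_def by (intro mult_left_mono) auto
  also have "\<dots> = -2*\<epsilon> - 2*(r*\<epsilon>)"
    using assms(1) by (simp add: algebra_simps)
  finally have entropy: "(1/\<beta>) * L \<le> -2*\<epsilon> - 2*(r*\<epsilon>)" .
  have "psi \<beta> \<epsilon> + psi \<beta> (x - \<epsilon>) - psi \<beta> x = (1/\<beta>) * L + 3/2*(\<epsilon>*x) - 3/2*\<epsilon>\<^sup>2"
    unfolding psi_def L_def by (simp add: power2_eq_square algebra_simps)
  moreover have "\<epsilon>*x \<le> \<epsilon>" "c*\<epsilon> \<le> 3/2*(r*\<epsilon>)" "0 \<le> \<epsilon>\<^sup>2" "0 \<le> r*\<epsilon>"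
    using x c \<epsilon>_pos assms(2) by (auto intro: mult_right_mono)
  ultimately show "psi \<beta> \<epsilon> + psi \<beta> (x - \<epsilon>) + c*\<epsilon> < psi \<beta> x"
    using entropy \<epsilon>_pos by linarith
qed

lemma Fb_minimizer_x0_pos:
  assumes "\<beta> > 0" "r \<ge> 0" "Fb_minimizer \<beta> r (a, b)"
  shows "1-a-b > 0"
proof (rule ccontr)
  have no_heavy: False if min: "Fb_minimizer \<beta> r (p, q)" and "q = 1 - p" "1/2 \<le> p" for p q
  proof -
    obtain \<epsilon> where \<epsilon>: "0 < \<epsilon>" "\<epsilon> \<le> 1/6"
      and transfer: "\<And>x c. 1/3 \<le> x \<Longrightarrow> x \<le> 1 \<Longrightarrow> c \<le> 3*r/2 \<Longrightarrow>
        psi \<beta> \<epsilon> + psi \<beta> (x - \<epsilon>) + c*\<epsilon> < psi \<beta> x"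
      using psi_transfer_from_zero[OF assms(1,2)] by blast
    have "psi \<beta> \<epsilon> + psi \<beta> (p - \<epsilon>) + 3*r/2*\<epsilon> < psi \<beta> p"
      using transfer[of p "3*r/2"] Fb_minimizer_nonneg[OF min] that(2,3) by simp
    moreover have "Fb \<beta> (p - \<epsilon>, q) r - Fb \<beta> (p, q) r
        = psi \<beta> \<epsilon> + psi \<beta> (p - \<epsilon>) + 3*r/2*\<epsilon> - psi \<beta> p"
      unfolding Fb_coords \<open>q = 1 - p\<close> by (simp add: field_simps)
    ultimately have "Fb \<beta> (p - \<epsilon>, q) r < Fb \<beta> (p, q) r"
      by linarith
    moreover have "(p - \<epsilon>, q) \<in> Xi"
      using min that(2,3) \<epsilon> unfolding Fb_minimizer_def Xi_def by auto
    ultimately show False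
      using Fb_minimizer_le[OF min, of "(p - \<epsilon>, q)"] by simp
  qed
  assume "\<not> 1-a-b > 0"
  then have "b = 1 - a"
    using Fb_minimizer_nonneg[OF assms(3)] by simp
  then consider "1/2 \<le> a" "b = 1 - a" | "1/2 \<le> b" "a = 1 - b"
    by linarith
  then show False
    using no_heavy[OF assms(3)] no_heavy[OF Fb_minimizer_swap[OF assms(3)]] by cases
qed

lemma Fb_minimizer_x1_pos:
  assumes "\<beta> > 0" "r \<ge> 0" "Fb_minimizer \<beta> r (a, b)"
  shows "a > 0"
proof (rule ccontr)
  obtain \<epsilon> where \<epsilon>: "0 < \<epsilon>" "\<epsilon> \<le> 1/6"
    and transfer: "\<And>x c. 1/3 \<le> x \<Longrightarrow> x \<le> 1 \<Longrightarrow> c \<le> 3*r/2 \<Longrightarrow>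
      psi \<beta> \<epsilon> + psi \<beta> (x - \<epsilon>) + c*\<epsilon> < psi \<beta> x"
    using psi_transfer_from_zero[OF assms(1,2)] by blast
  have nonneg: "b \<ge> 0" "1-a-b \<ge> 0"
    using Fb_minimizer_nonneg[OF assms(3)] by auto
  assume "\<not> a > 0"
  then have a: "a = 0"
    using Fb_minimizer_nonneg[OF assms(3)] by simp
  obtain a' b' where better: "(a', b') \<in> Xi" "Fb \<beta> (a', b') r < Fb \<beta> (a, b) r"
  proof (cases "1/2 \<le> b")
    case True
    have "psi \<beta> \<epsilon> + psi \<beta> (b - \<epsilon>) + 0*\<epsilon> < psi \<beta> b"
      using transfer[of b 0] True nonneg a assms(2) by simp
    then have "Fb \<beta> (\<epsilon>, b - \<epsilon>) r < Fb \<beta> (a, b) r"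
      unfolding Fb_coords a by (simp add: algebra_simps)
    moreover have "(\<epsilon>, b - \<epsilon>) \<in> Xi"
      using True \<epsilon> nonneg a unfolding Xi_def by auto
    ultimately show thesis
      using that by blast
  next
    case False
    have "psi \<beta> \<epsilon> + psi \<beta> ((1-b) - \<epsilon>) + (-3*r/2)*\<epsilon> < psi \<beta> (1-b)"
      using transfer[of "1-b" "-3*r/2"] False nonneg a assms(2) by simp
    moreover have "Fb \<beta> (\<epsilon>, b) r - Fb \<beta> (a, b) r
        = psi \<beta> \<epsilon> + psi \<beta> ((1-b) - \<epsilon>) + (-3*r/2)*\<epsilon> - psi \<beta> (1-b)"
      unfolding Fb_coords a by (simp add: field_simps)
    ultimately have "Fb \<beta> (\<epsilon>, b) r < Fb \<beta> (a, b) r"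
      by linarith
    moreover have "(\<epsilon>, b) \<in> Xi"
      using False \<epsilon> nonneg a unfolding Xi_def by auto
    ultimately show thesis
      using that by blast
  qed
  then show False
    using Fb_minimizer_le[OF assms(3) better(1)] better(2) by linarith
qed

lemma Fb_minimizer_interior:
  assumes "\<beta> > 0" "r \<ge> 0" "Fb_minimizer \<beta> r (a, b)"
  shows "a > 0" "b > 0" "1-a-b > 0"
  using Fb_minimizer_x1_pos[OF assms] Fb_minimizer_x0_pos[OF assms]
    Fb_minimizer_x1_pos[OF assms(1,2) Fb_minimizer_swap[OF assms(3)]] by auto

lemma Fb_minimizer_stationary:
  assumes "\<beta> > 0" "Fb_minimizer \<beta> r (a, b)" and pos: "a > 0" "b > 0" "1-a-b > 0"
  shows "Gb \<beta> a - Gb \<beta> (1-a-b) = 3*r/2"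
proof -
  define C where "C = (ln 3 + 1) / \<beta>"
  define g where "g s = Fb \<beta> (a + s, b) r" for s
  have g_eq: "g = (\<lambda>s. psi \<beta> (1-a-b - s) + psi \<beta> (a + s) + psi \<beta> b
      + r*(1-a-b - s) - r/2*(a + s + b) + 1/4)"
    unfolding g_def Fb_coords by (simp add: algebra_simps)
  have "((\<lambda>s. 1-a-b - s) has_real_derivative -1) (at 0)" "((\<lambda>s. a + s) has_real_derivative 1) (at 0)"
    by (auto intro!: derivative_eq_intros)
  from this[THEN psi_has_real_derivative_comp, of \<beta>]
  have d0: "((\<lambda>s. psi \<beta> (1-a-b - s)) has_real_derivative (Gb \<beta> (1-a-b) + C) * -1) (at 0)"
    and d1: "((\<lambda>s. psi \<beta> (a + s)) has_real_derivative (Gb \<beta> a + C) * 1) (at 0)"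
    using pos unfolding C_def by simp_all
  have deriv: "(g has_real_derivative (Gb \<beta> (1-a-b) + C) * -1 + (Gb \<beta> a + C) * 1 - r - r/2) (at 0)"
    unfolding g_eq by (rule derivative_eq_intros d0 d1 refl | simp)+
  have local_min: "\<forall>s. \<bar>0 - s\<bar> < min a (1-a-b) \<longrightarrow> g 0 \<le> g s"
    using Fb_minimizer_le[OF assms(2)] pos unfolding g_def Xi_def by (auto simp: abs_less_iff)
  have "(Gb \<beta> (1-a-b) + C) * -1 + (Gb \<beta> a + C) * 1 - r - r/2 = 0"
    using DERIV_local_min[OF deriv _ local_min] pos by simp
  then show ?thesis
    by simp
qed

lemma Fb_minimizer_x0_le:
  assumes "r > 0" "Fb_minimizer \<beta> r (a, b)"
  shows "1-a-b \<le> a"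
proof (rule ccontr)
  assume "\<not> 1-a-b \<le> a"
  then have "3*r/2 * (2*a + b - 1) < 0"
    using assms(1) by (intro mult_pos_neg) auto
  then have "Fb \<beta> (1-a-b, b) r < Fb \<beta> (a, b) r"
    using Fb_exchange_x0_x1[of \<beta> a b r] by simp
  moreover have "(1-a-b, b) \<in> Xi"
    using Fb_minimizer_nonneg[OF assms(2)] unfolding Xi_def by auto
  ultimately show False
    using Fb_minimizer_le[OF assms(2), of "(1-a-b, b)"] by simp
qed

lemma Fb_minimizer_off_diagonal:
  assumes "\<beta> > 2" "r > 0" "Fb_minimizer \<beta> r (a, b)"
  shows "a \<noteq> b"
proof
  assume "a = b"
  have a_third: "1/3 \<le> a"
    using Fb_minimizer_x0_le[OF assms(2,3)] \<open>a = b\<close> by simp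
  define t where "t = (a - lb \<beta>) / 2"
  have "lb \<beta> < a"
    using a_third lb_less_third[OF assms(1)] by linarith
  then have t: "0 < t" "lb \<beta> \<le> a - t"
    unfolding t_def by (auto simp: field_simps)
  have "Fb \<beta> (a + t, a - t) r - Fb \<beta> (a, a) r = psi \<beta> (a + t) + psi \<beta> (a - t) - 2 * psi \<beta> a"
    unfolding Fb_coords by (simp add: algebra_simps)
  then have "Fb \<beta> (a + t, a - t) r < Fb \<beta> (a, b) r"
    using psi_strict_concave_right[of \<beta> a t] t assms(1) \<open>a = b\<close> by simp
  moreover have "(a + t, a - t) \<in> Xi"
    using Fb_minimizer_nonneg[OF assms(3)] t lb_pos[of \<beta>] assms(1) \<open>a = b\<close>
    unfolding Xi_def by auto
  ultimately show False
    using Fb_minimizer_le[OF assms(3), of "(a + t, a - t)"] by simp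
qed

lemma Fb_minimizer_ordered:
  assumes "\<beta> > 2" "r > 0" "Fb_minimizer \<beta> r (a, b)" "a < b"
  shows "y2_condition \<beta> r (Gb \<beta> a)" "Hb \<beta> (Gb \<beta> a) = a" "Kb \<beta> (Gb \<beta> a) = b"
proof -
  have \<beta>: "\<beta> > 0"
    using assms(1) by simp
  have pos: "a > 0" "b > 0" "1-a-b > 0"
    using Fb_minimizer_interior[OF \<beta> _ assms(3)] assms(2) by simp_all
  have "Gb \<beta> a - Gb \<beta> (1-a-b) = 3*r/2" "Gb \<beta> b - Gb \<beta> (1-b-a) = 3*r/2"
    using Fb_minimizer_stationary[OF \<beta> assms(3) pos]
      Fb_minimizer_stationary[OF \<beta> Fb_minimizer_swap[OF assms(3)]] pos by simp_all
  then have G: "Gb \<beta> b = Gb \<beta> a" "Gb \<beta> (1-a-b) = Gb \<beta> a - 3*r/2"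
    by (simp_all add: algebra_simps)
  \<comment> \<open>Two distinct points with the same value of Gb lie on opposite sides of its maximum at lb.\<close>
  have a_lb: "a < lb \<beta>"
    using Gb_right_less_iff[OF \<beta>, of a b] G(1) assms(4) by (cases "a < lb \<beta>") auto
  have b_lb: "lb \<beta> < b"
    using Gb_left_less_iff[OF \<beta>, of b a] G(1) assms(4) pos by (cases "lb \<beta> < b") auto
  show Ha: "Hb \<beta> (Gb \<beta> a) = a"
    using Hb_eq[OF \<beta>] a_lb pos by simp
  show Kb: "Kb \<beta> (Gb \<beta> a) = b"
    using Kb_eq[OF \<beta> b_lb G(1)] .
  have "Hb \<beta> (Gb \<beta> a - 3 * r / 2) = 1-a-b"
    using Hb_eq[OF \<beta> _ _ G(2)] Fb_minimizer_x0_le[OF assms(2,3)] a_lb pos by simp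
  moreover have "Gb \<beta> a \<le> gb \<beta>"
    using Gb_less_gb[OF \<beta>, of a] a_lb pos by simp
  ultimately show "y2_condition \<beta> r (Gb \<beta> a)"
    unfolding y2_condition_def using Ha Kb by simp
qed

lemma Fb_minimizer_value:
  assumes "\<beta> > 2" "r > 0" "Fb_minimizer \<beta> r (a, b)"
  shows "Fb \<beta> (a, b) r = Fb \<beta> (mm1 \<beta> r) r"
proof -
  have ordered: "Fb \<beta> (p, q) r = Fb \<beta> (mm1 \<beta> r) r" if "Fb_minimizer \<beta> r (p, q)" "p < q" for p q
    using Fb_minimizer_ordered[OF assms(1,2) that] y2_eq[OF assms(1,2)] unfolding mm1_def by simp
  consider "a < b" | "b < a"
    using Fb_minimizer_off_diagonal[OF assms] by (meson linorder_neqE)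
  then show ?thesis
  proof cases
    case 2
    then show ?thesis
      using ordered[OF Fb_minimizer_swap[OF assms(3)]] Fb_swap[of \<beta> a b r] by simp
  qed (use ordered[OF assms(3)] in simp)
qed

lemma Fb_mm1_le:
  assumes "\<beta> > 2" "r > 0" "x \<in> Xi"
  shows "Fb \<beta> (mm1 \<beta> r) r \<le> Fb \<beta> x r"
proof -
  obtain a b where min: "Fb_minimizer \<beta> r (a, b)"
    using Fb_minimizer_exists by (metis surj_pair)
  show ?thesis
    using Fb_minimizer_value[OF assms(1,2) min] Fb_minimizer_le[OF min assms(3)] by simp
qed

lemma Fb_mm1_eq_mm2: "Fb \<beta> (mm1 \<beta> r) r = Fb \<beta> (mm2 \<beta> r) r"
  unfolding mm1_def mm2_def by (rule Fb_swap)

section \<open>The symmetric critical point\<close>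

definition log_ratio :: "real \<Rightarrow> real" where
  "log_ratio t = ln ((1 - 2*t) / t)"

lemma log_ratio_pos: "0 < t \<Longrightarrow> t < 1/3 \<Longrightarrow> log_ratio t > 0"
  unfolding log_ratio_def by (subst ln_gt_zero_iff) (auto simp: field_simps)

lemma hfun_log_ratio: "hfun t = 1 - 3*t - 3*t*(1 - 2*t) * log_ratio t"
  unfolding hfun_def log_ratio_def by (simp add: algebra_simps)

lemma ffun_log_ratio: "ffun r t = 2 / (3 * (1 - r - 3*t)) * log_ratio t"
  unfolding ffun_def log_ratio_def by simp

lemma log_ratio_has_real_derivative:
  assumes "0 < t" "t < 1/2"
  shows "(log_ratio has_real_derivative -1 / (t * (1 - 2*t))) (at t)"
proof -
  have "(log_ratio has_real_derivative (1 / ((1 - 2*t) / t)) * ((-2 * t - (1 - 2*t) * 1) / (t*t))) (at t)"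
    unfolding log_ratio_def[abs_def] using assms by (auto intro!: derivative_eq_intros)
  moreover have "(1 / ((1 - 2*t) / t)) * ((-2 * t - (1 - 2*t) * 1) / (t*t)) = -1 / (t * (1 - 2*t))"
    using assms by (simp add: field_simps)
  ultimately show ?thesis
    by simp
qed

lemma hfun_has_real_derivative:
  assumes "0 < t" "t < 1/2"
  shows "(hfun has_real_derivative 3 * (4*t - 1) * log_ratio t) (at t)"
proof -
  have "hfun = (\<lambda>t. 1 - 3*t - 3*t*(1 - 2*t) * log_ratio t)"
    using hfun_log_ratio by blast
  moreover have "((\<lambda>t. 1 - 3*t - 3*t*(1 - 2*t) * log_ratio t) has_real_derivative
      0 - 3*1 - ((3*1*(1 - 2*t) + 3*t*(0 - 2*1)) * log_ratio t + 3*t*(1 - 2*t) * (-1 / (t * (1 - 2*t))))) (at t)"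
    using log_ratio_has_real_derivative[OF assms] by (auto intro!: derivative_eq_intros)
  moreover have "0 - 3*1 - ((3*1*(1 - 2*t) + 3*t*(0 - 2*1)) * log_ratio t + 3*t*(1 - 2*t) * (-1 / (t * (1 - 2*t))))
      = 3 * (4*t - 1) * log_ratio t"
    using assms by (simp add: field_simps)
  ultimately show ?thesis
    by simp
qed

lemma continuous_on_hfun: "0 < a \<Longrightarrow> b < 1/2 \<Longrightarrow> continuous_on {a..b} hfun"
  unfolding hfun_def by (intro continuous_intros) (auto simp: field_simps)

lemma hfun_strict_antimono:
  assumes "0 < s" "s < t" "t \<le> 1/4"
  shows "hfun t < hfun s"
proof (rule DERIV_neg_imp_decreasing_open[of s t hfun])
  show "\<exists>y. (hfun has_real_derivative y) (at x) \<and> y < 0" if "s < x" "x < t" for x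
    using hfun_has_real_derivative[of x] log_ratio_pos[of x] that assms
    by (auto intro!: mult_pos_neg mult_neg_pos)
qed (use assms continuous_on_hfun in auto)

lemma hfun_neg:
  assumes "1/4 \<le> t" "t < 1/3"
  shows "hfun t < 0"
proof -
  have "hfun t < hfun (1/3)"
  proof (rule DERIV_pos_imp_increasing_open[of t "1/3" hfun])
    show "\<exists>y. (hfun has_real_derivative y) (at x) \<and> 0 < y" if "t < x" "x < 1/3" for x
      using hfun_has_real_derivative[of x] log_ratio_pos[of x] that assms by auto
  qed (use assms continuous_on_hfun in auto)
  then show ?thesis
    unfolding hfun_def by simp
qed

lemma hfun_less_linear: "0 < t \<Longrightarrow> t < 1/3 \<Longrightarrow> hfun t < 1 - 3*t"
  using log_ratio_pos[of t] unfolding hfun_log_ratio by simp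

lemma hfun_sixth_pos: "hfun (1/6) > 0"
proof -
  have "hfun (1/6) = 1/2 - 2/3 * ln 2"
    unfolding hfun_def using ln_realpow[of 2 2] by simp
  then show ?thesis
    using ln2_le_25_over_36 by simp
qed

lemma hfun_tendsto_one: "(hfun \<longlongrightarrow> 1) (at_right 0)"
  unfolding hfun_def by real_asymp

lemma m0fun_eq:
  assumes "0 < r" "r < 1" "0 < t" "t < kfun r" "hfun t = r"
  shows "m0fun r = t"
  unfolding m0fun_def
proof (rule the_equality)
  have below_quarter: "s < 1/4" if "0 < s" "s < kfun r" "hfun s = r" for s
    using hfun_neg[of s] that assms(1,2) unfolding kfun_def by (cases "s < 1/4") auto
  show "s = t" if "0 < s \<and> s < kfun r \<and> hfun s = r" for s
  proof -
    have "s < 1/4" "t < 1/4"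
      using below_quarter that assms by auto
    then show ?thesis
      using hfun_strict_antimono[of s t] hfun_strict_antimono[of t s] that assms
      by (cases s t rule: linorder_cases) auto
  qed
qed (use assms in simp)

lemma m0fun_bounds:
  assumes "0 < r" "r < 1"
  shows "0 < m0fun r" "m0fun r < 1/4" "m0fun r < kfun r" "hfun (m0fun r) = r"
proof -
  define t1 where "t1 = min (kfun r) (1/4)"
  have k: "0 < kfun r" "kfun r < 1/3"
    unfolding kfun_def using assms by auto
  have t1: "0 < t1" "t1 \<le> 1/4" "t1 \<le> kfun r"
    unfolding t1_def using k by auto
  have h_t1: "hfun t1 < r"
  proof (cases "kfun r \<le> 1/4")
    case True
    moreover have "1 - 3 * kfun r = r"
      unfolding kfun_def by (simp add: field_simps)
    ultimately show ?thesis
      using hfun_less_linear[of "kfun r"] k unfolding t1_def by simp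
  next
    case False
    then show ?thesis
      using hfun_neg[of "1/4"] assms unfolding t1_def by simp
  qed
  obtain e where e: "0 < e" "e < t1" "r < hfun e"
  proof -
    have "\<forall>\<^sub>F t in at_right 0. r < hfun t"
      using order_tendstoD(1)[OF hfun_tendsto_one] assms(2) .
    then obtain b where "b > 0" "\<And>t. 0 < t \<Longrightarrow> t < b \<Longrightarrow> r < hfun t"
      unfolding eventually_at_right_field by auto
    then show thesis
      using that[of "min (b/2) (t1/2)"] t1 by simp
  qed
  have "continuous_on {e..t1} hfun"
    using continuous_on_hfun e t1 by simp
  then obtain t where t: "e \<le> t" "t \<le> t1" "hfun t = r"
    using IVT2'[of hfun t1 r e] h_t1 e by auto
  moreover have "t \<noteq> t1"
    using t h_t1 by auto
  ultimately have "m0fun r = t" "t < t1"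
    using m0fun_eq[OF assms, of t] e t1 by simp_all
  then show "0 < m0fun r" "m0fun r < 1/4" "m0fun r < kfun r" "hfun (m0fun r) = r"
    using t e t1 by simp_all
qed

lemma ffun_at_m0fun:
  assumes "0 < r" "r < 1"
  shows "ffun r (m0fun r) = 2 / (9 * (m0fun r * (1 - 2 * m0fun r)))"
proof -
  define m where "m = m0fun r"
  have m: "0 < m" "m < 1/4" "hfun m = r"
    using m0fun_bounds[OF assms] unfolding m_def by auto
  have L: "log_ratio m > 0"
    using log_ratio_pos[of m] m by simp
  have "1 - r - 3*m = 3*m*(1 - 2*m) * log_ratio m"
    using m(3) unfolding hfun_log_ratio by simp
  then have "ffun r m = 2 / (3 * (3*m*(1 - 2*m) * log_ratio m)) * log_ratio m"
    unfolding ffun_log_ratio by simp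
  also have "\<dots> = 2 / (9 * (m * (1 - 2*m)))"
    using L m by (simp add: field_simps)
  finally show ?thesis
    unfolding m_def .
qed

lemma quadratic_strict_mono:
  fixes s t :: real
  assumes "0 < s" "s < t" "t \<le> 1/4"
  shows "s * (1 - 2 * s) < t * (1 - 2 * t)"
proof -
  have "0 < (t - s) * (1 - 2*(t + s))"
    using assms by (intro mult_pos_pos) auto
  then show ?thesis
    by (simp add: algebra_simps)
qed

lemma quadratic_root_exists:
  fixes \<beta> :: real
  assumes "\<beta> > 2"
  obtains q where "0 < q" "q < 1/6" "q * (1 - 2*q) = 2 / (9*\<beta>)"
proof -
  have "(\<lambda>t::real. t * (1 - 2*t)) 0 \<le> 2 / (9*\<beta>)" "2 / (9*\<beta>) \<le> (\<lambda>t::real. t * (1 - 2*t)) (1/6)"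
    using assms by (auto simp: field_simps)
  moreover have "continuous_on {0..1/6} (\<lambda>t::real. t * (1 - 2*t))"
    by (intro continuous_intros)
  ultimately obtain q where q: "0 \<le> q" "q \<le> 1/6" "q * (1 - 2*q) = 2 / (9*\<beta>)"
    using IVT'[of "\<lambda>t::real. t * (1 - 2*t)" 0 "2 / (9*\<beta>)" "1/6"] by auto
  moreover have "q \<noteq> 0"
    using q assms by auto
  moreover have "q \<noteq> 1/6"
  proof
    assume "q = 1/6"
    then have "q * (1 - 2*q) = 1/9"
      by (simp add: \<open>q = 1/6\<close>)
    then have "2 / (9*\<beta>) = 1/9"
      using q(3) by simp
    then show False
      using assms by (simp add: field_simps)
  qed
  ultimately show thesis
    using that[of q] by (simp add: less_le)
qed

lemma r2_eq:
  assumes "\<beta> > 2" "0 < q" "q < 1/6" "q * (1 - 2*q) = 2 / (9*\<beta>)"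
  shows "r2 \<beta> = hfun q"
  unfolding r2_def
proof (rule the_equality)
  have q1: "hfun q < 1 - 3*q"
    using hfun_less_linear[of q] assms by simp
  have q0: "0 < hfun q"
    using hfun_strict_antimono[of q "1/6"] hfun_sixth_pos assms by simp
  have "m0fun (hfun q) = q"
    using m0fun_eq[OF q0, of q] q1 assms unfolding kfun_def by simp
  moreover have "ffun (hfun q) q = \<beta>"
    using ffun_at_m0fun[OF q0] q1 assms \<open>m0fun (hfun q) = q\<close> by simp
  ultimately show "0 < hfun q \<and> hfun q < 1 \<and> ffun (hfun q) (m0fun (hfun q)) = \<beta>"
    using q0 q1 assms by simp
  show "r = hfun q" if r: "0 < r \<and> r < 1 \<and> ffun r (m0fun r) = \<beta>" for r
  proof -
    define m where "m = m0fun r"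
    have m: "0 < m" "m < 1/4" "hfun m = r"
      using m0fun_bounds[of r] r unfolding m_def by auto
    have "2 / (9 * (m * (1 - 2*m))) = \<beta>" "0 < m * (1 - 2*m)"
      using ffun_at_m0fun[of r] r m unfolding m_def by simp_all
    then have "m * (1 - 2*m) = q * (1 - 2*q)"
      using assms(4) by (auto simp: field_simps)
    then have "m = q"
      using quadratic_strict_mono[of m q] quadratic_strict_mono[of q m] m assms(2,3)
      by (cases m q rule: linorder_cases) auto
    then show ?thesis
      using m by simp
  qed
qed

lemma ffun_has_real_derivative:
  assumes "0 < t" "t < 1/3" "0 < 1 - r - 3*t"
  shows "(ffun r has_real_derivative 2 * (r - hfun t) / (3 * (t * (1 - 2*t)) * (1 - r - 3*t)\<^sup>2)) (at t)"
proof -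
  have inverse_part: "((\<lambda>t. 2 / (3 * (1 - r - 3*t))) has_real_derivative 2 / (1 - r - 3*t)\<^sup>2) (at t)"
  proof -
    have "((\<lambda>t. 2 / (3 * (1 - r - 3*t))) has_real_derivative
        (0 * (3 * (1 - r - 3*t)) - 2 * (3 * (0 - 0 - 3*1))) / ((3 * (1 - r - 3*t)) * (3 * (1 - r - 3*t)))) (at t)"
      using assms by (intro derivative_eq_intros refl) auto
    moreover have "(0 * (3 * D) - 2 * (3 * (0 - 0 - 3*1))) / ((3 * D) * (3 * D)) = 2 / D\<^sup>2" for D :: real
      by (simp add: power2_eq_square)
    ultimately show ?thesis
      by metis
  qed
  have "(ffun r has_real_derivative
      2 / (1 - r - 3*t)\<^sup>2 * log_ratio t + -1 / (t * (1 - 2*t)) * (2 / (3 * (1 - r - 3*t)))) (at t)"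
    unfolding ffun_log_ratio[abs_def]
    using DERIV_mult[OF inverse_part log_ratio_has_real_derivative] assms by simp
  also have "2 / (1 - r - 3*t)\<^sup>2 * log_ratio t + -1 / (t * (1 - 2*t)) * (2 / (3 * (1 - r - 3*t)))
      = 2 * (r - hfun t) / (3 * (t * (1 - 2*t)) * (1 - r - 3*t)\<^sup>2)"
  proof -
    have alg: "2 / D\<^sup>2 * L + -1 / P * (2 / (3 * D)) = 2 * (3 * P * L - D) / (3 * P * D\<^sup>2)"
      if "D \<noteq> 0" "P \<noteq> 0" for D P L :: real
      using that by (simp add: field_simps power2_eq_square)
    have "r - hfun t = 3 * (t * (1 - 2*t)) * log_ratio t - (1 - r - 3*t)"
      unfolding hfun_log_ratio by (simp add: algebra_simps)
    then show ?thesis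
      by (simp only:) (rule alg, use assms in auto)
  qed
  finally show ?thesis .
qed

lemma continuous_on_ffun:
  "0 < a \<Longrightarrow> b < 1/3 \<Longrightarrow> 0 < 1 - r - 3*b \<Longrightarrow> continuous_on {a..b} (ffun r)"
  unfolding ffun_def by (intro continuous_intros) (auto simp: field_simps)

lemma ffun_strict_antimono:
  assumes "0 < s" "s < t" "t \<le> m" "m \<le> 1/4" "m < kfun r" "hfun m = r"
  shows "ffun r t < ffun r s"
proof (rule DERIV_neg_imp_decreasing_open[of s t "ffun r"])
  show "\<exists>y. (ffun r has_real_derivative y) (at x) \<and> y < 0" if "s < x" "x < t" for x
  proof -
    have "0 < 1 - r - 3*x"
      using that assms unfolding kfun_def by simp
    moreover have "r < hfun x"
      using hfun_strict_antimono[of x m] that assms by simp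
    ultimately show ?thesis
      using ffun_has_real_derivative[of x r] that assms
      by (auto intro!: divide_neg_pos mult_pos_pos)
  qed
  show "continuous_on {s..t} (ffun r)"
    using continuous_on_ffun[of s t r] assms unfolding kfun_def by simp
qed (use assms in simp)

lemma ffun_at_top:
  assumes "r < 1"
  shows "filterlim (ffun r) at_top (at_right 0)"
proof -
  have "((\<lambda>t. 2 / (3 * (1 - r - 3*t))) \<longlongrightarrow> 2 / (3 * (1 - r - 3*0))) (at_right 0)"
    using assms by (intro tendsto_intros) auto
  moreover have "filterlim log_ratio at_top (at_right 0)"
    unfolding log_ratio_def by real_asymp
  ultimately show ?thesis
    unfolding ffun_log_ratio[abs_def] using assms
    by (intro filterlim_tendsto_pos_mult_at_top) auto
qed

lemma pb_eq:
  assumes "0 < r" "r < 1" "0 < t" "t < m0fun r" "ffun r t = \<beta>"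
  shows "pb \<beta> r = t"
  unfolding pb_def
proof (rule the_equality)
  note m = m0fun_bounds[OF assms(1,2)]
  show "s = t" if "0 < s \<and> s < m0fun r \<and> ffun r s = \<beta>" for s
    using ffun_strict_antimono[of s t "m0fun r" r] ffun_strict_antimono[of t s "m0fun r" r] that assms m
    by (cases s t rule: linorder_cases) auto
qed (use assms in simp)

lemma ffun_at_m0fun_less:
  assumes "\<beta> > 2" "0 < r" "r < r2 \<beta>"
  shows "r < 1" "ffun r (m0fun r) < \<beta>"
proof -
  obtain q where q: "0 < q" "q < 1/6" "q * (1 - 2*q) = 2 / (9*\<beta>)"
    using quadratic_root_exists[OF assms(1)] .
  have r2: "r2 \<beta> = hfun q"
    using r2_eq[OF assms(1) q] .
  then show r1: "r < 1"
    using hfun_less_linear[of q] q assms(3) by simp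
  define m where "m = m0fun r"
  have m: "0 < m" "m < 1/4" "hfun m = r"
    using m0fun_bounds[OF assms(2) r1] unfolding m_def by auto
  have "q < m"
    using hfun_strict_antimono[of m q] m q assms(3) r2 by (cases m q rule: linorder_cases) auto
  then have "2 / (9*\<beta>) < m * (1 - 2*m)"
    using quadratic_strict_mono[of q m] q m by simp
  moreover have "2 / (9 * X) < \<beta>" if "2 / (9*\<beta>) < X" for X
  proof -
    have "0 < 2 / (9*\<beta>)"
      using assms(1) by simp
    then have "0 < X"
      using that by linarith
    then show ?thesis
      using that assms(1) by (simp add: field_simps)
  qed
  ultimately show "ffun r (m0fun r) < \<beta>"
    using ffun_at_m0fun[OF assms(2) r1] unfolding m_def[symmetric] by simp
qed

lemma pb_bounds:
  assumes "\<beta> > 2" "0 < r" "r < r2 \<beta>"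
  shows "0 < pb \<beta> r" "pb \<beta> r < 1/4"
proof -
  note r1 = ffun_at_m0fun_less(1)[OF assms] and f_m = ffun_at_m0fun_less(2)[OF assms]
  define m where "m = m0fun r"
  have m: "0 < m" "m < 1/4" "m < kfun r"
    using m0fun_bounds[OF assms(2) r1] unfolding m_def by auto
  obtain e where e: "0 < e" "e < m" "\<beta> < ffun r e"
  proof -
    have "\<forall>\<^sub>F t in at_right 0. \<beta> < ffun r t"
      using ffun_at_top[OF r1] unfolding filterlim_at_top_dense by blast
    then obtain b where "b > 0" "\<And>t. 0 < t \<Longrightarrow> t < b \<Longrightarrow> \<beta> < ffun r t"
      unfolding eventually_at_right_field by auto
    then show thesis
      using that[of "min (b/2) (m/2)"] m by simp
  qed
  have "continuous_on {e..m} (ffun r)"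
    using continuous_on_ffun[of e m r] e m unfolding kfun_def by simp
  then obtain t where t: "e \<le> t" "t \<le> m" "ffun r t = \<beta>"
    using IVT2'[of "ffun r" m \<beta> e] f_m e unfolding m_def by auto
  moreover have "t \<noteq> m"
    using t f_m unfolding m_def by auto
  ultimately have "pb \<beta> r = t"
    using pb_eq[OF assms(2) r1, of t] e unfolding m_def by simp
  then show "0 < pb \<beta> r" "pb \<beta> r < 1/4"
    using t \<open>t \<noteq> m\<close> e m by simp_all
qed

theorem lemma5p9:
  fixes \<beta> :: real
  assumes "\<beta> > 2"
  shows "(\<forall>r. 0 < r \<and> r < r2 \<beta> \<longrightarrow>
            Fb \<beta> (mm1 \<beta> r) r = Fb \<beta> (mm2 \<beta> r) r \<and>
            Fb \<beta> (mm2 \<beta> r) r < Fb \<beta> (mm0 \<beta> r) r)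
       \<and> (\<forall>r > 0. \<forall>x \<in> Xi. Fb \<beta> (mm1 \<beta> r) r \<le> Fb \<beta> x r \<and> Fb \<beta> (mm2 \<beta> r) r \<le> Fb \<beta> x r)"
proof -
  have global: "Fb \<beta> (mm2 \<beta> r) r \<le> Fb \<beta> x r" if "r > 0" "x \<in> Xi" for r x
    using Fb_mm1_le[OF assms that] Fb_mm1_eq_mm2 by simp
  have "Fb \<beta> (mm2 \<beta> r) r < Fb \<beta> (mm0 \<beta> r) r" if "0 < r" "r < r2 \<beta>" for r
  proof -
    define p where "p = pb \<beta> r"
    have p: "0 < p" "p < 1/4"
      using pb_bounds[OF assms that] unfolding p_def by simp_all
    then have "3*r/2 * (2*p + p - 1) < 0"
      using \<open>0 < r\<close> by (intro mult_pos_neg) auto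
    then have "Fb \<beta> (1-p-p, p) r < Fb \<beta> (p, p) r"
      using Fb_exchange_x0_x1[of \<beta> p p r] by linarith
    moreover have "(1-p-p, p) \<in> Xi"
      using p unfolding Xi_def by simp
    ultimately show ?thesis
      using global[OF \<open>0 < r\<close>] unfolding mm0_def p_def by fastforce
  qed
  then show ?thesis
    using global Fb_mm1_eq_mm2 by simp
qed

end
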